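(* Let $G=(V,E)$ be a simple, undirected, unweighted, connected, locally finite graph. If there is $k>0$ such that $\mathrm{Ric}(i,j)\ge k$ for every edge $i\sim j$, then there exists a polynomial $P$ such that $|B_r(v)|\le P(r)$ for all $v\in V$ and all $r\ge0$.
   Context: $B_r(v)=\{u\in V: d_G(u,v)\le r\}$. For an edge $i\sim j$ with degrees $d_i,d_j$ and neighbour sets $S_1(\cdot)$: $\sharp_\Delta=S_1(i)\cap S_1(j)$; $\sharp_\square^i=\{k\in S_1(i)\setminus (S_1(j)\cup\{j\}) : \exists\, w\in (S_1(k)\cap S_1(j))\setminus (S_1(i)\cup\{i\})\}$, $\sharp_\square^j$ symmetric; $\gamma_{\max}=\max\big\{\max_{k\in\sharp_\square^i}|(S_1(k)\cap S_1(j))\setminus(S_1(i)\cup\{i\})|,\ \max_{w\in\sharp_\square^j}|(S_1(w)\cap S_1(i))\setminus(S_1(j)\cup\{j\})|\big\}$. Balanced Forman curvature: $\mathrm{Ric}(i,j)=0$ if $\min\{d_i,d_j\}=1$, otherwise $\mathrm{Ric}(i,j)=\frac{2}{d_i}+\frac{2}{d_j}-2+\frac{2|\sharp_\Delta|}{\max\{d_i,d_j\}}+\frac{|\sharp_\Delta|}{\min\{d_i,d_j\}}+\frac{\gamma_{\max}^{-1}}{\max\{d_i,d_j\}}(|\sharp_\square^i|+|\sharp_\square^j|)$, the last term being $0$ when $\sharp_\square^i=\emptyset$. *)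

theory Defs
  imports Complex_Main "HOL-Computational_Algebra.Polynomial"
begin

text \<open>A graph is given by a vertex set V and an edge relation E (only edges between
vertices of V are taken into account).\<close>

definition simple_graph :: "'a set \<Rightarrow> ('a \<Rightarrow> 'a \<Rightarrow> bool) \<Rightarrow> bool" where
  "simple_graph V E \<longleftrightarrow> (\<forall>x y. E x y \<longrightarrow> E y x) \<and> (\<forall>x. \<not> E x x)"

definition nbhd :: "'a set \<Rightarrow> ('a \<Rightarrow> 'a \<Rightarrow> bool) \<Rightarrow> 'a \<Rightarrow> 'a set" where
  "nbhd V E v = {u \<in> V. E v u}"

definition deg :: "'a set \<Rightarrow> ('a \<Rightarrow> 'a \<Rightarrow> bool) \<Rightarrow> 'a \<Rightarrow> nat" where
  "deg V E v = card (nbhd V E v)"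

definition locally_finite :: "'a set \<Rightarrow> ('a \<Rightarrow> 'a \<Rightarrow> bool) \<Rightarrow> bool" where
  "locally_finite V E \<longleftrightarrow> (\<forall>v\<in>V. finite (nbhd V E v))"

definition walk_rel :: "'a set \<Rightarrow> ('a \<Rightarrow> 'a \<Rightarrow> bool) \<Rightarrow> 'a \<Rightarrow> 'a \<Rightarrow> bool" where
  "walk_rel V E x y \<longleftrightarrow> x \<in> V \<and> y \<in> V \<and> E x y"

definition connected_graph :: "'a set \<Rightarrow> ('a \<Rightarrow> 'a \<Rightarrow> bool) \<Rightarrow> bool" where
  "connected_graph V E \<longleftrightarrow> (\<forall>u\<in>V. \<forall>v\<in>V. \<exists>n. (walk_rel V E ^^ n) u v)"

definition gdist :: "'a set \<Rightarrow> ('a \<Rightarrow> 'a \<Rightarrow> bool) \<Rightarrow> 'a \<Rightarrow> 'a \<Rightarrow> nat" where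
  "gdist V E u v = (LEAST n. (walk_rel V E ^^ n) u v)"

definition gball :: "'a set \<Rightarrow> ('a \<Rightarrow> 'a \<Rightarrow> bool) \<Rightarrow> real \<Rightarrow> 'a \<Rightarrow> 'a set" where
  "gball V E r v = {u \<in> V. real (gdist V E u v) \<le> r}"

definition tri :: "'a set \<Rightarrow> ('a \<Rightarrow> 'a \<Rightarrow> bool) \<Rightarrow> 'a \<Rightarrow> 'a \<Rightarrow> 'a set" where
  "tri V E i j = nbhd V E i \<inter> nbhd V E j"

definition sq :: "'a set \<Rightarrow> ('a \<Rightarrow> 'a \<Rightarrow> bool) \<Rightarrow> 'a \<Rightarrow> 'a \<Rightarrow> 'a set" where
  "sq V E i j = {k \<in> nbhd V E i - (nbhd V E j \<union> {j}).
      \<exists>w. w \<in> (nbhd V E k \<inter> nbhd V E j) - (nbhd V E i \<union> {i})}"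

definition gamma_max :: "'a set \<Rightarrow> ('a \<Rightarrow> 'a \<Rightarrow> bool) \<Rightarrow> 'a \<Rightarrow> 'a \<Rightarrow> nat" where
  "gamma_max V E i j = max
     (Max ((\<lambda>k. card ((nbhd V E k \<inter> nbhd V E j) - (nbhd V E i \<union> {i}))) ` sq V E i j))
     (Max ((\<lambda>w. card ((nbhd V E w \<inter> nbhd V E i) - (nbhd V E j \<union> {j}))) ` sq V E j i))"

definition bf_ric :: "'a set \<Rightarrow> ('a \<Rightarrow> 'a \<Rightarrow> bool) \<Rightarrow> 'a \<Rightarrow> 'a \<Rightarrow> real" where
  "bf_ric V E i j =
    (let di = real (deg V E i); dj = real (deg V E j); t = real (card (tri V E i j)) in
     if min di dj = 1 then 0 else
       2 / di + 2 / dj - 2 + 2 * t / max di dj + t / min di dj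
       + (if sq V E i j = {} then 0 else
           (inverse (real (gamma_max V E i j)) / max di dj)
             * (real (card (sq V E i j)) + real (card (sq V E j i)))))"

end

theory Submission
  imports Defs
begin

text \<open>Positive balanced Forman curvature bounds the diameter (a discrete Bonnet--Myers
  theorem); a connected, locally finite graph of bounded diameter is finite, and then the
  constant polynomial |V| bounds every ball.

  For the diameter bound let f be the distance to a fixed vertex and take the Laplacian
  (mean of f over the neighbours minus f). For an edge a ~ b with f b = f a + 1, split the
  neighbourhoods of a and b into the other endpoint, common neighbours, vertices on 4-cycles
  through the edge and the rest; moving mass along the 4-cycles shows that the Laplacian drops
  by at least Ric(a, b) from a to b. Along a shortest path it therefore drops by k per step,
  while for a 1-Lipschitz f it stays in [-1, 1]; so no vertex is farther than 2 / k.\<close>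

section \<open>Graph distance\<close>

lemma gdist_le: "(walk_rel V E ^^ n) x u \<Longrightarrow> gdist V E x u \<le> n"
  unfolding gdist_def by (rule Least_le)

lemma gdist_walk:
  assumes "connected_graph V E" "x \<in> V" "u \<in> V"
  shows "(walk_rel V E ^^ gdist V E x u) x u"
proof -
  have "\<exists>n. (walk_rel V E ^^ n) x u"
    using assms unfolding connected_graph_def by blast
  then show ?thesis
    unfolding gdist_def by (rule LeastI_ex)
qed

lemma gdist_edge_le:
  assumes "connected_graph V E" "x \<in> V" "u \<in> V" "w \<in> V" "E u w"
  shows "gdist V E x w \<le> gdist V E x u + 1"
proof -
  have "(walk_rel V E ^^ Suc (gdist V E x u)) x w"
    using gdist_walk[OF assms(1-3)] assms(3-5) by (auto simp: walk_rel_def)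
  then show ?thesis
    using gdist_le by fastforce
qed

lemma gdist_eq_0D:
  assumes "connected_graph V E" "x \<in> V" "u \<in> V" "gdist V E x u = 0"
  shows "u = x"
  using gdist_walk[OF assms(1-3)] assms(4) by auto

lemma gdist_SucE:
  assumes "connected_graph V E" "x \<in> V" "u \<in> V" "gdist V E x u = Suc m"
  obtains z where "z \<in> V" "E z u" "gdist V E x z = m"
proof -
  obtain z where walk_z: "(walk_rel V E ^^ m) x z" and "walk_rel V E z u"
    using gdist_walk[OF assms(1-3)] assms(4) by auto
  then have z: "z \<in> V" "E z u"
    by (auto simp: walk_rel_def)
  have "gdist V E x z \<le> m"
    using walk_z by (rule gdist_le)
  moreover have "gdist V E x u \<le> gdist V E x z + 1"
    using gdist_edge_le[OF assms(1,2) z(1) assms(3) z(2)] .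
  ultimately show ?thesis
    using that z assms(4) by simp
qed

lemma finite_gdist_le:
  assumes "connected_graph V E" "locally_finite V E" "x \<in> V"
  shows "finite {u \<in> V. gdist V E x u \<le> n}"
proof (induction n)
  case 0
  have "{u \<in> V. gdist V E x u \<le> 0} \<subseteq> {x}"
    using gdist_eq_0D[OF assms(1,3)] by auto
  then show ?case
    using finite_subset by blast
next
  case (Suc n)
  let ?B = "{u \<in> V. gdist V E x u \<le> n}"
  have "{u \<in> V. gdist V E x u \<le> Suc n} \<subseteq> ?B \<union> (\<Union>z\<in>?B. nbhd V E z)"
  proof
    fix u assume u: "u \<in> {u \<in> V. gdist V E x u \<le> Suc n}"
    show "u \<in> ?B \<union> (\<Union>z\<in>?B. nbhd V E z)"
    proof (cases "gdist V E x u = Suc n")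
      case True
      then obtain z where "z \<in> V" "E z u" "gdist V E x z = n"
        using gdist_SucE[OF assms(1,3)] u by blast
      then show ?thesis
        using u by (auto simp: nbhd_def)
    qed (use u in auto)
  qed
  moreover have "finite (\<Union>z\<in>?B. nbhd V E z)"
    using Suc.IH assms(2) by (auto simp: locally_finite_def)
  ultimately show ?case
    using Suc.IH finite_subset by blast
qed

section \<open>Weighted-sum estimates\<close>

text \<open>Of the mass 1 / d at each w in T, q is moved to each partner k of w and the rest stays
  at w.\<close>

lemma sum_divide_le_transport:
  fixes S T :: "'a set" and R :: "'a \<Rightarrow> 'a \<Rightarrow> bool" and f :: "'a \<Rightarrow> real"
    and \<gamma> q d c :: real
  assumes fin: "finite S" "finite T"
    and deg: "\<And>w. w \<in> T \<Longrightarrow> real (card {k\<in>S. R k w}) \<le> \<gamma>"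
    and q: "0 \<le> q" "q * \<gamma> \<le> 1 / d"
    and f: "\<And>w. w \<in> T \<Longrightarrow> f w \<le> c"
  shows "sum f T / d \<le> c * (card T / d - q * (\<Sum>w\<in>T. \<Sum>k\<in>S. of_bool (R k w)))
           + q * (\<Sum>w\<in>T. \<Sum>k\<in>S. of_bool (R k w) * f w)"
proof -
  define h where "h w = (\<Sum>k\<in>S. of_bool (R k w) :: real)" for w
  have mass: "f w / d \<le> c * (1 / d - q * h w) + q * (\<Sum>k\<in>S. of_bool (R k w) * f w)"
    if "w \<in> T" for w
  proof -
    have "h w = real (card {k\<in>S. R k w})"
      using fin by (simp add: h_def Collect_conj_eq Int_commute)
    then have "q * h w \<le> 1 / d"
      using mult_left_mono[of "h w" \<gamma> q] deg[OF that] q by simp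
    then have "(1 / d - q * h w) * f w \<le> (1 / d - q * h w) * c"
      using f[OF that] by (intro mult_left_mono) auto
    moreover have "h w * f w = (\<Sum>k\<in>S. of_bool (R k w) * f w)"
      unfolding h_def by (rule sum_distrib_right)
    ultimately show ?thesis
      by (simp add: algebra_simps)
  qed
  have "sum f T / d = (\<Sum>w\<in>T. f w / d)"
    by (simp add: sum_divide_distrib)
  also have "\<dots> \<le> (\<Sum>w\<in>T. c * (1 / d - q * h w) + q * (\<Sum>k\<in>S. of_bool (R k w) * f w))"
    by (rule sum_mono) (rule mass)
  also have "\<dots> = c * (card T / d - q * (\<Sum>w\<in>T. h w)) + q * (\<Sum>w\<in>T. \<Sum>k\<in>S. of_bool (R k w) * f w)"
    by (simp add: sum.distrib sum_subtractf sum_distrib_left[symmetric] right_diff_distrib)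
  finally show ?thesis
    by (simp add: h_def)
qed

lemma bipartite_transport_bound:
  fixes S T :: "'a set" and R :: "'a \<Rightarrow> 'a \<Rightarrow> bool" and f :: "'a \<Rightarrow> real"
    and \<gamma> q dS dT :: real
  assumes fin: "finite S" "finite T"
    and deg_S: "\<And>k. k \<in> S \<Longrightarrow> 1 \<le> card {w\<in>T. R k w} \<and> real (card {w\<in>T. R k w}) \<le> \<gamma>"
    and deg_T: "\<And>w. w \<in> T \<Longrightarrow> 1 \<le> card {k\<in>S. R k w} \<and> real (card {k\<in>S. R k w}) \<le> \<gamma>"
    and q: "0 \<le> q" "q * \<gamma> \<le> 1 / dS" "q * \<gamma> \<le> 1 / dT"
    and f_S: "\<And>k. k \<in> S \<Longrightarrow> -1 \<le> f k"
    and f_T: "\<And>w. w \<in> T \<Longrightarrow> f w \<le> 2"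
    and f_R: "\<And>k w. k \<in> S \<Longrightarrow> w \<in> T \<Longrightarrow> R k w \<Longrightarrow> f w \<le> f k + 1"
  shows "sum f T / dT - sum f S / dS \<le> 2 * card T / dT + card S / dS - q * (card S + card T)"
proof -
  define N where "N = (\<Sum>k\<in>S. \<Sum>w\<in>T. of_bool (R k w) :: real)"
  have N_swap: "N = (\<Sum>w\<in>T. \<Sum>k\<in>S. of_bool (R k w))"
    unfolding N_def by (rule sum.swap)
  have T_side: "sum f T / dT \<le> 2 * (card T / dT - q * N) + q * (\<Sum>w\<in>T. \<Sum>k\<in>S. of_bool (R k w) * f w)"
    using sum_divide_le_transport[OF fin, of R \<gamma> q dT f 2] deg_T q f_T by (simp add: N_swap)
  have "sum (\<lambda>k. - f k) S / dS
      \<le> 1 * (card S / dS - q * N) + q * (\<Sum>k\<in>S. \<Sum>w\<in>T. of_bool (R k w) * - f k)"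
    using sum_divide_le_transport[OF fin(2,1), of "\<lambda>w k. R k w" \<gamma> q dS "\<lambda>k. - f k" 1]
      deg_S q f_S by (force simp: N_def)
  then have S_side: "- sum f S / dS \<le> card S / dS - q * N - q * (\<Sum>k\<in>S. \<Sum>w\<in>T. of_bool (R k w) * f k)"
    by (simp add: sum_negf sum_distrib_left right_diff_distrib)
  have moved: "(\<Sum>w\<in>T. \<Sum>k\<in>S. of_bool (R k w) * f w) - (\<Sum>k\<in>S. \<Sum>w\<in>T. of_bool (R k w) * f k) \<le> N"
  proof -
    have "(\<Sum>w\<in>T. \<Sum>k\<in>S. of_bool (R k w) * f w) - (\<Sum>k\<in>S. \<Sum>w\<in>T. of_bool (R k w) * f k)
        = (\<Sum>k\<in>S. \<Sum>w\<in>T. of_bool (R k w) * (f w - f k))"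
      by (subst sum.swap) (simp add: sum_subtractf algebra_simps)
    also have "\<dots> \<le> N"
      unfolding N_def by (intro sum_mono) (auto dest: f_R)
    finally show ?thesis .
  qed
  have "real (card S) \<le> N"
    using sum_mono[of S "\<lambda>_. 1" "\<lambda>k. \<Sum>w\<in>T. of_bool (R k w) :: real"] deg_S fin
    by (simp add: N_def Collect_conj_eq Int_commute)
  moreover have "real (card T) \<le> N"
    using sum_mono[of T "\<lambda>_. 1" "\<lambda>w. \<Sum>k\<in>S. of_bool (R k w) :: real"] deg_T fin
    by (simp add: N_swap Collect_conj_eq Int_commute)
  ultimately have "q * (card S + card T) \<le> 2 * q * N"
    using mult_left_mono[of "card S + card T" "2 * N" q] q(1) by simp
  then show ?thesis
    using T_side S_side mult_left_mono[OF moved q(1)] by (simp add: right_diff_distrib)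
qed

lemma triangle_weight_bound:
  fixes da db t :: real
  assumes "0 < da" "0 < db" "0 \<le> t"
  shows "t * max 0 (1 / db - 1 / da) - 2 * t / db - t / da \<le> - (2 * t / max da db) - t / min da db"
proof (cases "da \<le> db")
  case True
  then have "1 / db \<le> 1 / da"
    using assms by (intro divide_left_mono) auto
  then show ?thesis
    using True by simp
next
  case False
  then have "1 / da \<le> 1 / db"
    using assms by (intro divide_left_mono) auto
  then show ?thesis
    using False by (simp add: right_diff_distrib)
qed

text \<open>The neighbourhood of a (of b) is b (is a), t common neighbours, sa (sb) vertices on
  4-cycles through the edge and ra (rb) others; fT, fSa, \<dots> are the sums of f over these parts.\<close>

lemma neighbour_means_bound:
  fixes da db t sa sb ra rb fT fSa fSb fRa fRb sqt :: real
  assumes da_eq: "da = 1 + t + sa + ra" and db_eq: "db = 1 + t + sb + rb"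
    and "0 \<le> t" "0 \<le> sa" "0 \<le> ra" "0 \<le> sb" "0 \<le> rb"
    and fT: "0 \<le> fT" "fT \<le> t" and fRa: "- ra \<le> fRa" and fRb: "fRb \<le> 2 * rb"
    and fS: "fSb / db - fSa / da \<le> 2 * sb / db + sa / da - sqt"
  shows "(fT + fSb + fRb) / db - (1 + fT + fSa + fRa) / da
    \<le> 1 - (2 / da + 2 / db - 2 + 2 * t / max da db + t / min da db + sqt)"
proof -
  have da_pos: "0 < da" and db_pos: "0 < db"
    using assms(1-7) by auto
  have "(fT + fSb + fRb) / db - (1 + fT + fSa + fRa) / da
      = fT * (1 / db - 1 / da) + (fSb / db - fSa / da) + fRb / db - fRa / da - 1 / da"
    by (simp add: add_divide_distrib diff_divide_distrib algebra_simps)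
  also have "\<dots> \<le> t * max 0 (1 / db - 1 / da) + (2 * sb / db + sa / da - sqt)
        + 2 * rb / db + ra / da - 1 / da"
  proof -
    have "fT * (1 / db - 1 / da) \<le> t * max 0 (1 / db - 1 / da)"
      using fT by (intro order.trans[OF mult_left_mono mult_right_mono]) auto
    moreover have "fRb / db \<le> 2 * rb / db"
      using fRb db_pos by (intro divide_right_mono) auto
    moreover have "(- fRa) / da \<le> ra / da"
      using fRa da_pos by (intro divide_right_mono) auto
    ultimately show ?thesis
      using fS by simp
  qed
  also have "\<dots> = 3 - 2 / da - 2 / db + (t * max 0 (1 / db - 1 / da) - 2 * t / db - t / da) - sqt"
  proof -
    have "sa / da + ra / da = 1 - 1 / da - t / da" "sb / db + rb / db = 1 - 1 / db - t / db"
      using da_eq db_eq da_pos db_pos by (simp_all add: field_simps)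
    then show ?thesis
      by simp
  qed
  also have "\<dots> \<le> 1 - (2 / da + 2 / db - 2 + 2 * t / max da db + t / min da db + sqt)"
    using triangle_weight_bound[OF da_pos db_pos \<open>0 \<le> t\<close>] by simp
  finally show ?thesis .
qed

section \<open>Lipschitz functions and the Laplacian\<close>

definition edge_lipschitz :: "'a set \<Rightarrow> ('a \<Rightarrow> 'a \<Rightarrow> bool) \<Rightarrow> ('a \<Rightarrow> real) \<Rightarrow> bool" where
  "edge_lipschitz V E f \<longleftrightarrow> (\<forall>u\<in>V. \<forall>w\<in>V. E u w \<longrightarrow> f w \<le> f u + 1)"

definition laplacian :: "'a set \<Rightarrow> ('a \<Rightarrow> 'a \<Rightarrow> bool) \<Rightarrow> ('a \<Rightarrow> real) \<Rightarrow> 'a \<Rightarrow> real" where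
  "laplacian V E f y = sum f (nbhd V E y) / real (deg V E y) - f y"

lemma laplacian_diff_const:
  assumes "0 < deg V E y"
  shows "laplacian V E (\<lambda>u. f u - c) y = laplacian V E f y"
  using assms by (simp add: laplacian_def deg_def sum_subtractf field_simps)

lemma edge_lipschitz_gdist:
  assumes "connected_graph V E" "x \<in> V"
  shows "edge_lipschitz V E (\<lambda>u. real (gdist V E x u))"
  using gdist_edge_le[OF assms] by (force simp: edge_lipschitz_def)

locale sgraph =
  fixes V :: "'a set" and E :: "'a \<Rightarrow> 'a \<Rightarrow> bool"
  assumes simple: "simple_graph V E"
begin

lemma edge_sym: "E x y \<Longrightarrow> E y x"
  using simple by (simp add: simple_graph_def)

lemma edge_irrefl: "\<not> E x x"
  using simple by (simp add: simple_graph_def)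

lemma edge_lipschitz_nbhd:
  assumes "edge_lipschitz V E f" "y \<in> V" "u \<in> nbhd V E y"
  shows "f y - 1 \<le> f u" "f u \<le> f y + 1"
  using assms edge_sym by (force simp: edge_lipschitz_def nbhd_def)+

lemma laplacian_le_one:
  assumes "edge_lipschitz V E f" "y \<in> V" "0 < deg V E y"
  shows "laplacian V E f y \<le> 1"
proof -
  have "sum f (nbhd V E y) \<le> real (deg V E y) * (f y + 1)"
    using sum_bounded_above[of "nbhd V E y" f "f y + 1"] edge_lipschitz_nbhd[OF assms(1,2)]
    by (simp add: deg_def)
  then have "sum f (nbhd V E y) / real (deg V E y) \<le> f y + 1"
    using assms(3) by (simp add: pos_divide_le_eq mult.commute)
  then show ?thesis
    by (simp add: laplacian_def)
qed

lemma laplacian_ge_minus_one: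
  assumes "edge_lipschitz V E f" "y \<in> V" "0 < deg V E y"
  shows "-1 \<le> laplacian V E f y"
proof -
  have "real (deg V E y) * (f y - 1) \<le> sum f (nbhd V E y)"
    using sum_bounded_below[of "nbhd V E y" "f y - 1" f] edge_lipschitz_nbhd[OF assms(1,2)]
    by (simp add: deg_def)
  then have "f y - 1 \<le> sum f (nbhd V E y) / real (deg V E y)"
    using assms(3) by (simp add: pos_le_divide_eq mult.commute)
  then show ?thesis
    by (simp add: laplacian_def)
qed

end

section \<open>Squares through an edge\<close>

definition sq_term :: "'a set \<Rightarrow> ('a \<Rightarrow> 'a \<Rightarrow> bool) \<Rightarrow> 'a \<Rightarrow> 'a \<Rightarrow> real" where
  "sq_term V E i j = (if sq V E i j = {} then 0 else
     inverse (real (gamma_max V E i j)) / max (real (deg V E i)) (real (deg V E j))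
       * (real (card (sq V E i j)) + real (card (sq V E j i))))"

lemma bf_ric_eq_of_pos:
  assumes "0 < bf_ric V E i j"
  shows "bf_ric V E i j = 2 / real (deg V E i) + 2 / real (deg V E j) - 2
    + 2 * real (card (tri V E i j)) / max (real (deg V E i)) (real (deg V E j))
    + real (card (tri V E i j)) / min (real (deg V E i)) (real (deg V E j)) + sq_term V E i j"
proof -
  have "min (real (deg V E i)) (real (deg V E j)) \<noteq> 1"
  proof
    assume "min (real (deg V E i)) (real (deg V E j)) = 1"
    then have "bf_ric V E i j = 0"
      by (simp add: bf_ric_def Let_def)
    with assms show False
      by simp
  qed
  then show ?thesis
    by (simp add: bf_ric_def sq_term_def Let_def)
qed

context sgraph
begin

lemma sq_partners_eq:
  assumes "k \<in> sq V E a b"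
  shows "{w \<in> sq V E b a. E k w} = (nbhd V E k \<inter> nbhd V E b) - (nbhd V E a \<union> {a})"
  using assms edge_sym by (auto simp: sq_def nbhd_def)

lemma sq_empty_sym:
  assumes "sq V E a b = {}"
  shows "sq V E b a = {}"
proof (rule ccontr)
  assume "sq V E b a \<noteq> {}"
  then obtain w where w: "w \<in> sq V E b a" by blast
  then have "(nbhd V E w \<inter> nbhd V E a) - (nbhd V E b \<union> {b}) \<noteq> {}"
    by (auto simp: sq_def)
  then show False
    using sq_partners_eq[OF w] assms by simp
qed

lemma gamma_max_commute: "gamma_max V E b a = gamma_max V E a b"
  by (simp add: gamma_max_def max.commute)

lemma sq_partners_card:
  assumes lf: "locally_finite V E" and "a \<in> V" and k: "k \<in> sq V E a b"
  shows "1 \<le> card {w \<in> sq V E b a. E k w}"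
    and "card {w \<in> sq V E b a. E k w} \<le> gamma_max V E a b"
proof -
  let ?P = "(nbhd V E k \<inter> nbhd V E b) - (nbhd V E a \<union> {a})"
  have "k \<in> V"
    using k by (auto simp: sq_def nbhd_def)
  then have "finite ?P"
    using lf by (auto simp: locally_finite_def)
  moreover have "?P \<noteq> {}"
    using k by (auto simp: sq_def)
  ultimately show "1 \<le> card {w \<in> sq V E b a. E k w}"
    unfolding sq_partners_eq[OF k] by (simp add: Suc_le_eq card_gt_0_iff)
  have "finite (sq V E a b)"
    using lf \<open>a \<in> V\<close> by (auto simp: locally_finite_def sq_def)
  then have "card ?P \<le> Max ((\<lambda>k. card ((nbhd V E k \<inter> nbhd V E b) - (nbhd V E a \<union> {a}))) ` sq V E a b)"
    using k by (intro Max_ge) auto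
  then show "card {w \<in> sq V E b a. E k w} \<le> gamma_max V E a b"
    unfolding sq_partners_eq[OF k] gamma_max_def by simp
qed

lemma deg_pos:
  assumes "locally_finite V E" "y \<in> V" "x \<in> V" "E x y"
  shows "0 < deg V E y"
  using assms edge_sym by (auto simp: deg_def locally_finite_def card_gt_0_iff nbhd_def)

lemma square_transport_bound:
  assumes lf: "locally_finite V E" and a: "a \<in> V" and b: "b \<in> V" and ab: "E a b"
    and lip: "edge_lipschitz V E f" and "f a = 0" "f b = 1"
    and ne: "sq V E a b \<noteq> {}"
  shows "sum f (sq V E b a) / real (deg V E b) - sum f (sq V E a b) / real (deg V E a)
     \<le> 2 * card (sq V E b a) / real (deg V E b) + card (sq V E a b) / real (deg V E a)
        - inverse (real (gamma_max V E a b)) / max (real (deg V E a)) (real (deg V E b))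
          * (card (sq V E a b) + card (sq V E b a))"
proof (rule bipartite_transport_bound)
  let ?\<gamma> = "real (gamma_max V E a b)" and ?d = "max (real (deg V E a)) (real (deg V E b))"
  show "finite (sq V E a b)" "finite (sq V E b a)"
    using lf a b by (auto simp: locally_finite_def sq_def)
  show "1 \<le> card {w \<in> sq V E b a. E k w} \<and> real (card {w \<in> sq V E b a. E k w}) \<le> ?\<gamma>"
    if "k \<in> sq V E a b" for k
    using sq_partners_card[OF lf a that] by simp
  show "1 \<le> card {k \<in> sq V E a b. E k w} \<and> real (card {k \<in> sq V E a b. E k w}) \<le> ?\<gamma>"
    if "w \<in> sq V E b a" for w
  proof -
    have "{k \<in> sq V E a b. E k w} = {k \<in> sq V E a b. E w k}"
      using edge_sym by blast
    then show ?thesis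
      using sq_partners_card[OF lf b that] by (simp add: gamma_max_commute)
  qed
  obtain k where "k \<in> sq V E a b"
    using ne by blast
  then have "1 \<le> ?\<gamma>"
    using sq_partners_card[OF lf a] by fastforce
  then have q\<gamma>: "inverse ?\<gamma> / ?d * ?\<gamma> = 1 / ?d"
    by (simp add: field_simps)
  show "0 \<le> inverse ?\<gamma> / ?d"
    by simp
  show "inverse ?\<gamma> / ?d * ?\<gamma> \<le> 1 / real (deg V E a)"
    using deg_pos[OF lf a b edge_sym[OF ab]] unfolding q\<gamma> by (intro divide_left_mono) auto
  show "inverse ?\<gamma> / ?d * ?\<gamma> \<le> 1 / real (deg V E b)"
    using deg_pos[OF lf b a ab] unfolding q\<gamma> by (intro divide_left_mono) auto
  show "-1 \<le> f k" if "k \<in> sq V E a b" for k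
    using edge_lipschitz_nbhd[OF lip a] that \<open>f a = 0\<close> by (force simp: sq_def)
  show "f w \<le> 2" if "w \<in> sq V E b a" for w
    using edge_lipschitz_nbhd[OF lip b] that \<open>f b = 1\<close> by (force simp: sq_def)
  show "f w \<le> f k + 1" if "k \<in> sq V E a b" "w \<in> sq V E b a" "E k w" for k w
    using lip that by (auto simp: edge_lipschitz_def sq_def nbhd_def)
qed

lemma square_sum_bound:
  assumes lf: "locally_finite V E" and a: "a \<in> V" and b: "b \<in> V" and ab: "E a b"
    and lip: "edge_lipschitz V E f" and "f a = 0" "f b = 1"
  shows "sum f (sq V E b a) / real (deg V E b) - sum f (sq V E a b) / real (deg V E a)
     \<le> 2 * real (card (sq V E b a)) / real (deg V E b) + real (card (sq V E a b)) / real (deg V E a)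
        - sq_term V E a b"
proof (cases "sq V E a b = {}")
  case True
  then show ?thesis
    using sq_empty_sym by (simp add: sq_term_def)
next
  case False
  then show ?thesis
    using square_transport_bound[OF assms] by (simp add: sq_term_def)
qed

lemma sum_nbhd_edge_split:
  assumes fin: "finite (nbhd V E a)" and b: "b \<in> nbhd V E a"
  shows "sum g (nbhd V E a) = g b + sum g (tri V E a b) + sum g (sq V E a b)
           + sum g (nbhd V E a - insert b (nbhd V E b) - sq V E a b)"
proof -
  let ?T = "tri V E a b" and ?S = "sq V E a b" and ?R = "nbhd V E a - insert b (nbhd V E b) - sq V E a b"
  have S_sub: "?S \<subseteq> nbhd V E a - insert b (nbhd V E b)"
    by (auto simp: sq_def)
  have "b \<notin> nbhd V E b"
    using edge_irrefl by (simp add: nbhd_def)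
  then have b_notin: "b \<notin> ?T \<union> ?S \<union> ?R"
    using S_sub by (auto simp: tri_def)
  have fins: "finite ?T" "finite ?S" "finite ?R"
    using fin S_sub by (auto simp: tri_def intro: finite_subset)
  have "nbhd V E a = insert b (?T \<union> ?S \<union> ?R)"
    using b S_sub by (auto simp: tri_def)
  then have "sum g (nbhd V E a) = sum g (insert b (?T \<union> ?S \<union> ?R))"
    by (rule arg_cong)
  also have "\<dots> = g b + sum g (?T \<union> ?S \<union> ?R)"
    using b_notin fins by (intro sum.insert) auto
  also have "sum g (?T \<union> ?S \<union> ?R) = sum g (?T \<union> ?S) + sum g ?R"
    using fins by (intro sum.union_disjoint) (auto simp: tri_def)
  also have "sum g (?T \<union> ?S) = sum g ?T + sum g ?S"
    using fins S_sub by (intro sum.union_disjoint) (auto simp: tri_def)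
  finally show ?thesis
    by (simp add: add.assoc)
qed

lemma laplacian_edge_le_normalized:
  assumes lf: "locally_finite V E" and a: "a \<in> V" and b: "b \<in> V" and ab: "E a b"
    and ric: "0 < bf_ric V E a b"
    and lip: "edge_lipschitz V E f" and fa: "f a = 0" and fb: "f b = 1"
  shows "laplacian V E f b \<le> laplacian V E f a - bf_ric V E a b"
proof -
  define T where "T = tri V E a b"
  define Sa where "Sa = sq V E a b"
  define Sb where "Sb = sq V E b a"
  define Ra where "Ra = nbhd V E a - insert b (nbhd V E b) - Sa"
  define Rb where "Rb = nbhd V E b - insert a (nbhd V E a) - Sb"
  define da where "da = real (deg V E a)"
  define db where "db = real (deg V E b)"
  have nbhds: "finite (nbhd V E a)" "b \<in> nbhd V E a" "finite (nbhd V E b)" "a \<in> nbhd V E b"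
    using lf a b ab edge_sym[OF ab] by (auto simp: locally_finite_def nbhd_def)
  have split_a: "sum g (nbhd V E a) = g b + sum g T + sum g Sa + sum g Ra" for g :: "'a \<Rightarrow> real"
    using sum_nbhd_edge_split[OF nbhds(1,2)] by (simp add: T_def Sa_def Ra_def)
  have split_b: "sum g (nbhd V E b) = g a + sum g T + sum g Sb + sum g Rb" for g :: "'a \<Rightarrow> real"
    using sum_nbhd_edge_split[OF nbhds(3,4)] by (simp add: T_def Sb_def Rb_def tri_def Int_commute)
  have da_eq: "da = 1 + real (card T) + real (card Sa) + real (card Ra)"
    using split_a[of "\<lambda>_. 1"] by (simp add: da_def deg_def)
  have db_eq: "db = 1 + real (card T) + real (card Sb) + real (card Rb)"
    using split_b[of "\<lambda>_. 1"] by (simp add: db_def deg_def)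
  have f_a: "-1 \<le> f u" "f u \<le> 1" if "u \<in> nbhd V E a" for u
    using edge_lipschitz_nbhd[OF lip a that] fa by auto
  have f_b: "0 \<le> f u" "f u \<le> 2" if "u \<in> nbhd V E b" for u
    using edge_lipschitz_nbhd[OF lip b that] fb by auto
  have T_sum: "0 \<le> sum f T" "sum f T \<le> real (card T)"
    using sum_nonneg[of T f] sum_bounded_above[of T f 1] f_a f_b by (auto simp: T_def tri_def)
  have Ra_sum: "- real (card Ra) \<le> sum f Ra"
    using sum_bounded_below[of Ra "-1" f] f_a by (auto simp: Ra_def)
  have Rb_sum: "sum f Rb \<le> 2 * real (card Rb)"
    using sum_bounded_above[of Rb f 2] f_b by (auto simp: Rb_def mult.commute)
  have sq_sum: "sum f Sb / db - sum f Sa / da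
      \<le> 2 * real (card Sb) / db + real (card Sa) / da - sq_term V E a b"
    using square_sum_bound[OF lf a b ab lip fa fb] by (simp add: Sa_def Sb_def da_def db_def)
  have "sum f (nbhd V E b) / db - sum f (nbhd V E a) / da \<le> 1 - bf_ric V E a b"
    using neighbour_means_bound[OF da_eq db_eq of_nat_0_le_iff of_nat_0_le_iff of_nat_0_le_iff
        of_nat_0_le_iff of_nat_0_le_iff T_sum Ra_sum Rb_sum sq_sum]
    by (simp add: split_a split_b fa fb bf_ric_eq_of_pos[OF ric] T_def da_def db_def)
  then show ?thesis
    by (simp add: laplacian_def fa fb da_def db_def)
qed

lemma laplacian_edge_le:
  assumes lf: "locally_finite V E" and a: "a \<in> V" and b: "b \<in> V" and ab: "E a b"
    and ric: "0 < bf_ric V E a b"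
    and lip: "edge_lipschitz V E f" and fab: "f b = f a + 1"
  shows "laplacian V E f b \<le> laplacian V E f a - bf_ric V E a b"
proof -
  have "edge_lipschitz V E (\<lambda>u. f u - f a)"
    using lip by (simp add: edge_lipschitz_def)
  then have "laplacian V E (\<lambda>u. f u - f a) b \<le> laplacian V E (\<lambda>u. f u - f a) a - bf_ric V E a b"
    using laplacian_edge_le_normalized[OF lf a b ab ric] fab by simp
  then show ?thesis
    using deg_pos[OF lf a b edge_sym[OF ab]] deg_pos[OF lf b a ab]
    by (simp add: laplacian_diff_const)
qed

lemma laplacian_gdist_le:
  assumes lf: "locally_finite V E" and conn: "connected_graph V E" and "0 < k"
    and ric: "\<And>i j. i \<in> V \<Longrightarrow> j \<in> V \<Longrightarrow> E i j \<Longrightarrow> k \<le> bf_ric V E i j"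
    and x: "x \<in> V" and u: "u \<in> V" and deg_u: "0 < deg V E u"
  shows "laplacian V E (\<lambda>v. real (gdist V E x v)) u \<le> 1 - real (gdist V E x u) * k"
  using u deg_u
proof (induction "gdist V E x u" arbitrary: u)
  case 0
  then show ?case
    using laplacian_le_one[OF edge_lipschitz_gdist[OF conn x]] by simp
next
  case (Suc n)
  let ?f = "\<lambda>v. real (gdist V E x v)"
  obtain z where z: "z \<in> V" "E z u" "gdist V E x z = n"
    using gdist_SucE[OF conn x Suc.prems(1) Suc.hyps(2)[symmetric]] .
  have "laplacian V E ?f u \<le> laplacian V E ?f z - bf_ric V E z u"
    using ric[OF z(1) Suc.prems(1) z(2)] \<open>0 < k\<close> Suc.hyps(2) z(3)
    by (intro laplacian_edge_le[OF lf z(1) Suc.prems(1) z(2) _ edge_lipschitz_gdist[OF conn x]]) auto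
  also have "laplacian V E ?f z \<le> 1 - real n * k"
    using Suc.hyps(1)[OF z(3)[symmetric] z(1)] deg_pos[OF lf z(1) Suc.prems(1) edge_sym[OF z(2)]] z(3)
    by simp
  finally show ?case
    using ric[OF z(1) Suc.prems(1) z(2)] by (simp add: Suc.hyps(2)[symmetric] algebra_simps)
qed

lemma gdist_le_of_bf_ric_ge:
  assumes lf: "locally_finite V E" and conn: "connected_graph V E" and "0 < k"
    and ric: "\<And>i j. i \<in> V \<Longrightarrow> j \<in> V \<Longrightarrow> E i j \<Longrightarrow> k \<le> bf_ric V E i j"
    and x: "x \<in> V" and y: "y \<in> V"
  shows "real (gdist V E x y) \<le> 2 / k"
proof (cases "gdist V E x y")
  case 0
  then show ?thesis
    using \<open>0 < k\<close> by simp
next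
  case (Suc m)
  then obtain z where "z \<in> V" "E z y"
    using gdist_SucE[OF conn x y] by metis
  then have "0 < deg V E y"
    using deg_pos[OF lf y] by blast
  then have "-1 \<le> 1 - real (gdist V E x y) * k"
    using laplacian_ge_minus_one[OF edge_lipschitz_gdist[OF conn x] y]
      laplacian_gdist_le[OF lf conn \<open>0 < k\<close> ric x y] by fastforce
  then show ?thesis
    using \<open>0 < k\<close> by (simp add: pos_le_divide_eq)
qed

lemma finite_of_bf_ric_ge:
  assumes lf: "locally_finite V E" and conn: "connected_graph V E" and "0 < k"
    and ric: "\<And>i j. i \<in> V \<Longrightarrow> j \<in> V \<Longrightarrow> E i j \<Longrightarrow> k \<le> bf_ric V E i j"
  shows "finite V"
proof (cases "V = {}")
  case False
  then obtain x where x: "x \<in> V"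
    by blast
  have "gdist V E x u \<le> nat \<lceil>2 / k\<rceil>" if "u \<in> V" for u
    using gdist_le_of_bf_ric_ge[OF lf conn \<open>0 < k\<close> ric x that] by linarith
  then have "V \<subseteq> {u \<in> V. gdist V E x u \<le> nat \<lceil>2 / k\<rceil>}"
    by blast
  then show ?thesis
    using finite_gdist_le[OF conn lf x] finite_subset by blast
qed simp

end

theorem corollary3:
  fixes V :: "'a set" and E :: "'a \<Rightarrow> 'a \<Rightarrow> bool"
  assumes "simple_graph V E"
    and "connected_graph V E"
    and "locally_finite V E"
    and "\<exists>k::real. k > 0 \<and> (\<forall>i\<in>V. \<forall>j\<in>V. E i j \<longrightarrow> bf_ric V E i j \<ge> k)"
  shows "\<exists>P :: real poly. \<forall>v\<in>V. \<forall>r::real. r \<ge> 0 \<longrightarrow>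
           real (card (gball V E r v)) \<le> poly P r"
proof -
  interpret sgraph V E
    using assms(1) by (rule sgraph.intro)
  obtain k :: real where "0 < k" and "\<forall>i\<in>V. \<forall>j\<in>V. E i j \<longrightarrow> k \<le> bf_ric V E i j"
    using assms(4) by blast
  then have "finite V"
    using finite_of_bf_ric_ge[OF assms(3,2)] by blast
  then have "real (card (gball V E r v)) \<le> poly [:real (card V):] r" for r v
    by (simp add: card_mono gball_def)
  then show ?thesis
    by blast
qed

end
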